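(* Let $G$ and $H$ be graphs with $|V(G)|\ge2$, and let $S\subseteq E(G\times H)$. Define the graph $G^*$ as follows: <ul> <li>its vertex set is the set of $H$-fibers $\{{}_xH: x\in V(G)\}$;</li> <li>two distinct fibers ${}_xH$ and ${}_yH$ are adjacent if and only if $G\times H-S$ contains at least one edge with one end in ${}_xH$ and the other end in ${}_yH$.</li> </ul> If $G^*$ is disconnected, then one of the following holds: <ol> <li>$|S|>2\kappa'(G)e(H)$;</li> <li>$|S|=2\kappa'(G)e(H)$ and $S$ is the set induced by some minimum edge cut of $G$.</li> </ol>
   Context: All graphs are finite, simple and undirected. $e(H)=|E(H)|$. The direct product $G\times H$ has vertex set $V(G)\times V(H)$. Two vertices $(x,u),(y,v)$ are adjacent if and only if $xy\in E(G)$ and $uv\in E(H)$. For $x\in V(G)$, the $H$-fiber is ${}_xH=\{(x,u):u\in V(H)\}$. For a graph $G$ with at least two vertices, an edge cut is the set $E(X,Y)$ of all edges joining $X$ and $Y$, for a partition $(X,Y)$ of $V(G)$ into nonempty parts. $\kappa'(G)$ is the minimum size of an edge cut, and a minimum edge cut is an edge cut of that size. For $S_0\subseteq E(G)$, the set induced by $S_0$ is $\{(x,u)(y,v),(x,v)(y,u): xy\in S_0,\ uv\in E(H)\}$. *)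

theory Defs
  imports Main
begin

text \<open>A finite simple graph: a pair (V, E) with E a set of 2-element subsets of V.\<close>
type_synonym 'a graph = "'a set \<times> 'a set set"

definition verts :: "'a graph \<Rightarrow> 'a set" where "verts G = fst G"
definition edges :: "'a graph \<Rightarrow> 'a set set" where "edges G = snd G"

definition graph :: "'a graph \<Rightarrow> bool" where
  "graph G \<longleftrightarrow> finite (verts G) \<and>
     (\<forall>e\<in>edges G. \<exists>x y. x \<in> verts G \<and> y \<in> verts G \<and> x \<noteq> y \<and> e = {x, y})"

definition dprod :: "'a graph \<Rightarrow> 'b graph \<Rightarrow> ('a \<times> 'b) graph" where
  "dprod G H = (verts G \<times> verts H,
     {{(x,u),(y,v)} | x y u v. {x,y} \<in> edges G \<and> {u,v} \<in> edges H})"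

definition fiber :: "'a \<Rightarrow> 'b graph \<Rightarrow> ('a \<times> 'b) set" where
  "fiber x H = {(x,u) | u. u \<in> verts H}"

definition edges_between :: "'a graph \<Rightarrow> 'a set \<Rightarrow> 'a set \<Rightarrow> 'a set set" where
  "edges_between G X Y = {e \<in> edges G. \<exists>x\<in>X. \<exists>y\<in>Y. e = {x,y}}"

definition is_edge_cut :: "'a graph \<Rightarrow> 'a set set \<Rightarrow> bool" where
  "is_edge_cut G C \<longleftrightarrow> (\<exists>X Y. X \<noteq> {} \<and> Y \<noteq> {} \<and> X \<union> Y = verts G \<and> X \<inter> Y = {}
       \<and> C = edges_between G X Y)"

definition edge_conn :: "'a graph \<Rightarrow> nat" where
  "edge_conn G = Min (card ` {C. is_edge_cut G C})"

definition is_min_edge_cut :: "'a graph \<Rightarrow> 'a set set \<Rightarrow> bool" where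
  "is_min_edge_cut G C \<longleftrightarrow> is_edge_cut G C \<and> card C = edge_conn G"

definition induced_set :: "'a set set \<Rightarrow> 'b graph \<Rightarrow> ('a \<times> 'b) set set" where
  "induced_set S0 H = {{(x,u),(y,v)} | x y u v. {x,y} \<in> S0 \<and> {u,v} \<in> edges H}
                    \<union> {{(x,v),(y,u)} | x y u v. {x,y} \<in> S0 \<and> {u,v} \<in> edges H}"

definition fiber_graph :: "'a graph \<Rightarrow> 'b graph \<Rightarrow> ('a \<times> 'b) set set \<Rightarrow> ('a \<times> 'b) set graph" where
  "fiber_graph G H S = ((\<lambda>x. fiber x H) ` verts G,
     {{F1, F2} | F1 F2. F1 \<in> (\<lambda>x. fiber x H) ` verts G \<and> F2 \<in> (\<lambda>x. fiber x H) ` verts G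
        \<and> F1 \<noteq> F2 \<and> (\<exists>a\<in>F1. \<exists>b\<in>F2. {a,b} \<in> edges (dprod G H) - S)})"

definition connected :: "'a graph \<Rightarrow> bool" where
  "connected G \<longleftrightarrow> (\<forall>a\<in>verts G. \<forall>b\<in>verts G.
      (a, b) \<in> {(x, y). {x, y} \<in> edges G}\<^sup>*)"

end

theory Submission
  imports Defs
begin

(* Suppose the fiber graph G* of G \<times> H - S is disconnected.  Let X be the set of
   vertices x of G whose fiber is reachable in G* from a fixed fiber, and Y the rest; both are
   nonempty and (X, Y) partitions V(G).  Every edge of G \<times> H from a fiber over X to a fiber over
   Y must lie in S, since otherwise the fiber over its Y-end would also be reachable.  These
   "crossing" edges form exactly the set induced by the edge cut C = E(X, Y) of G, and there are
   2 |C| e(H) of them: one for each orientation (x,y) of an edge of C with x \<in> X, and each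
   orientation (u,v) of an edge of H.  Hence |S| \<ge> 2 |C| e(H) \<ge> 2 \<kappa>'(G) e(H), and in case of
   equality S is the induced set of C, which is then a minimum edge cut (if e(H) = 0 any minimum
   cut will do, as every induced set is empty). *)

lemma graph_edgeD:
  assumes "graph G" "{u,v} \<in> edges G"
  shows "u \<in> verts G" "v \<in> verts G" "u \<noteq> v"
  using assms unfolding graph_def by (auto simp: doubleton_eq_iff)

lemma graph_edgeE:
  assumes "graph G" "e \<in> edges G"
  obtains x y where "x \<in> verts G" "y \<in> verts G" "x \<noteq> y" "e = {x,y}"
  using assms unfolding graph_def by meson

lemma graph_edge_subset:
  assumes "graph G" "e \<in> edges G"
  shows "e \<subseteq> verts G"
  using graph_edgeE[OF assms] by blast

lemma graph_finite_edges:
  assumes "graph G"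
  shows "finite (edges G)"
proof -
  have "edges G \<subseteq> Pow (verts G)" using graph_edge_subset[OF assms] by blast
  moreover have "finite (verts G)" using assms unfolding graph_def by (rule conjunct1)
  ultimately show ?thesis by (meson finite_Pow_iff finite_subset)
qed

lemma verts_dprod: "verts (dprod G H) = verts G \<times> verts H"
  by (simp only: dprod_def verts_def fst_conv)

lemma edges_dprod:
  "edges (dprod G H) = {{(x,u),(y,v)} | x y u v. {x,y} \<in> edges G \<and> {u,v} \<in> edges H}"
  by (simp only: dprod_def edges_def snd_conv)

lemma graph_dprod:
  assumes "graph G" "graph H"
  shows "graph (dprod G H)"
  unfolding graph_def
proof
  show "finite (verts (dprod G H))"
    using assms by (simp add: graph_def verts_dprod)
  show "\<forall>e\<in>edges (dprod G H). \<exists>p q. p \<in> verts (dprod G H) \<and> q \<in> verts (dprod G H)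
          \<and> p \<noteq> q \<and> e = {p, q}"
  proof
    fix e assume "e \<in> edges (dprod G H)"
    then obtain x y u v where e: "e = {(x,u),(y,v)}" and xy: "{x,y} \<in> edges G"
      and uv: "{u,v} \<in> edges H"
      unfolding edges_dprod by blast
    have "(x,u) \<in> verts (dprod G H)" "(y,v) \<in> verts (dprod G H)" "(x,u) \<noteq> (y,v)"
      using graph_edgeD[OF assms(1) xy] graph_edgeD[OF assms(2) uv]
      by (simp_all add: verts_dprod)
    then show "\<exists>p q. p \<in> verts (dprod G H) \<and> q \<in> verts (dprod G H) \<and> p \<noteq> q \<and> e = {p, q}"
      using e by blast
  qed
qed

lemma card_arcs:
  assumes "graph H"
  shows "card {(u,v). {u,v} \<in> edges H} = 2 * card (edges H)"
proof -
  define orient where "orient e = {(u,v). {u,v} = e}" for e :: "'a set"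
  have orient_edge: "\<exists>x y. orient e = {(x,y),(y,x)} \<and> x \<noteq> y" if e: "e \<in> edges H" for e
  proof -
    obtain x y where "x \<noteq> y" "e = {x,y}" using graph_edgeE[OF assms e] by metis
    then show ?thesis unfolding orient_def by (auto simp: doubleton_eq_iff)
  qed
  then have two: "card (orient e) = 2" and fin: "finite (orient e)" if "e \<in> edges H" for e
    using that by fastforce+
  have disj: "\<forall>e\<in>edges H. \<forall>e'\<in>edges H. e \<noteq> e' \<longrightarrow> orient e \<inter> orient e' = {}"
    unfolding orient_def by blast
  have "{(u,v). {u,v} \<in> edges H} = (\<Union>e\<in>edges H. orient e)"
    unfolding orient_def by blast
  also have "card \<dots> = (\<Sum>e\<in>edges H. card (orient e))"
    using card_UN_disjoint[OF graph_finite_edges[OF assms]] fin disj by blast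
  also have "\<dots> = 2 * card (edges H)"
    using two by simp
  finally show ?thesis .
qed

lemma finite_card_edge_cuts:
  assumes "graph G"
  shows "finite (card ` {C. is_edge_cut G C})"
proof -
  have "{C. is_edge_cut G C} \<subseteq> Pow (edges G)"
    unfolding is_edge_cut_def edges_between_def by auto
  then show ?thesis using graph_finite_edges[OF assms]
    by (meson finite_Pow_iff finite_imageI finite_subset)
qed

lemma edge_conn_le:
  assumes "graph G" "is_edge_cut G C"
  shows "edge_conn G \<le> card C"
  unfolding edge_conn_def using finite_card_edge_cuts[OF assms(1)] assms(2) by simp

lemma min_edge_cut_exists:
  assumes "graph G" "is_edge_cut G C"
  obtains C0 where "is_min_edge_cut G C0"
proof -
  have "edge_conn G \<in> card ` {C. is_edge_cut G C}"
    unfolding edge_conn_def using finite_card_edge_cuts[OF assms(1)] assms(2)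
    by (intro Min_in) auto
  then show ?thesis using that unfolding is_min_edge_cut_def by auto
qed

definition fiber_cut :: "'a graph \<Rightarrow> 'b graph \<Rightarrow> 'a set \<Rightarrow> 'a set \<Rightarrow> ('a \<times> 'b) set set" where
  "fiber_cut G H X Y = {{(x,u),(y,v)} | x y u v.
      x \<in> X \<and> y \<in> Y \<and> {x,y} \<in> edges G \<and> {u,v} \<in> edges H}"

lemma induced_set_iff:
  "e \<in> induced_set S0 H \<longleftrightarrow> (\<exists>x y u v. {x,y} \<in> S0 \<and> {u,v} \<in> edges H
      \<and> (e = {(x,u),(y,v)} \<or> e = {(x,v),(y,u)}))"
  unfolding induced_set_def by blast

lemma edges_between_iff:
  "e \<in> edges_between G X Y \<longleftrightarrow> e \<in> edges G \<and> (\<exists>x\<in>X. \<exists>y\<in>Y. e = {x,y})"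
  unfolding edges_between_def by simp

lemma product_edge_reorient:
  assumes "{x,y} = {a,b}" "{u,v} \<in> E"
  shows "\<exists>p q. {p,q} \<in> E \<and> {(x,u),(y,v)} = {(a,p),(b,q)}"
proof (cases "x = a")
  case True
  then have "y = b" using assms(1) by (auto simp: doubleton_eq_iff)
  then show ?thesis using True assms(2) by blast
next
  case False
  then have "x = b" "y = a" using assms(1) by (auto simp: doubleton_eq_iff)
  moreover have "{v,u} \<in> E" using assms(2) by (simp add: insert_commute)
  ultimately show ?thesis by (metis insert_commute)
qed

lemma induced_set_edges_between:
  "induced_set (edges_between G X Y) H = fiber_cut G H X Y"
proof
  show "induced_set (edges_between G X Y) H \<subseteq> fiber_cut G H X Y"
  proof
    fix e assume "e \<in> induced_set (edges_between G X Y) H"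
    then obtain x y u v where xy: "{x,y} \<in> edges_between G X Y"
      and uv: "{u,v} \<in> edges H" and e: "e = {(x,u),(y,v)} \<or> e = {(x,v),(y,u)}"
      unfolding induced_set_iff by blast
    then obtain a b where ab: "{x,y} = {a,b}" "a \<in> X" "b \<in> Y" "{a,b} \<in> edges G"
      unfolding edges_between_iff by metis
    have vu: "{v,u} \<in> edges H" using uv by (simp add: insert_commute)
    obtain p q where "{p,q} \<in> edges H" "e = {(a,p),(b,q)}"
      using e
    proof
      assume "e = {(x,u),(y,v)}"
      then show ?thesis using product_edge_reorient[OF ab(1) uv] that by metis
    next
      assume "e = {(x,v),(y,u)}"
      then show ?thesis using product_edge_reorient[OF ab(1) vu] that by metis
    qed
    then show "e \<in> fiber_cut G H X Y"
      unfolding fiber_cut_def using ab(2-4) by blast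
  qed
  show "fiber_cut G H X Y \<subseteq> induced_set (edges_between G X Y) H"
    unfolding fiber_cut_def induced_set_def edges_between_def by blast
qed

(* Counting the crossing edges: for disjoint X and Y they are in bijection with pairs
   consisting of an orientation (x,y) of an edge of E(X,Y) with x \<in> X and an orientation
   (u,v) of an edge of H. *)
lemma card_fiber_cut:
  fixes G :: "'a graph" and H :: "'b graph"
  assumes "graph H" "X \<inter> Y = {}"
  shows "card (fiber_cut G H X Y) = 2 * card (edges_between G X Y) * card (edges H)"
proof -
  define P where "P = {(x,y). x \<in> X \<and> y \<in> Y \<and> {x,y} \<in> edges G}"
  define D where "D = {(u,v). {u,v} \<in> edges H}"
  define f where "f = (\<lambda>((x::'a,y::'a),(u::'b,v::'b)). {(x,u),(y,v)})"
  have crossing: "fiber_cut G H X Y = f ` (P \<times> D)"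
    unfolding fiber_cut_def f_def P_def D_def by (fastforce simp: image_iff)
  have "inj_on f (P \<times> D)"
    using assms(2) by (auto simp: inj_on_def f_def P_def doubleton_eq_iff)
  then have "card (fiber_cut G H X Y) = card P * card D"
    by (simp add: crossing card_image card_cartesian_product)
  moreover have "edges_between G X Y = (\<lambda>(x,y). {x,y}) ` P"
    unfolding edges_between_def P_def by auto
  moreover have "inj_on (\<lambda>(x,y). {x,y}) P"
    using assms(2) by (auto simp: inj_on_def P_def doubleton_eq_iff)
  ultimately show ?thesis
    using card_arcs[OF assms(1)] by (simp add: card_image D_def)
qed

lemma verts_fiber_graph: "verts (fiber_graph G H S) = (\<lambda>x. fiber x H) ` verts G"
  by (simp only: fiber_graph_def verts_def fst_conv)

lemma edges_fiber_graph:
  "edges (fiber_graph G H S) = {{F1, F2} | F1 F2.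
     F1 \<in> (\<lambda>x. fiber x H) ` verts G \<and> F2 \<in> (\<lambda>x. fiber x H) ` verts G \<and> F1 \<noteq> F2
     \<and> (\<exists>a\<in>F1. \<exists>b\<in>F2. {a,b} \<in> edges (dprod G H) - S)}"
  by (simp only: fiber_graph_def edges_def snd_conv)

lemma fiber_graph_edgeI:
  assumes "graph H" "x \<in> verts G" "y \<in> verts G" "fiber x H \<noteq> fiber y H"
    and "{x,y} \<in> edges G" "{u,v} \<in> edges H" "{(x,u),(y,v)} \<notin> S"
  shows "{fiber x H, fiber y H} \<in> edges (fiber_graph G H S)"
proof -
  have "(x,u) \<in> fiber x H" "(y,v) \<in> fiber y H"
    using graph_edgeD[OF assms(1,6)] unfolding fiber_def by auto
  moreover have "{(x,u),(y,v)} \<in> edges (dprod G H) - S"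
    using assms(5-7) unfolding edges_dprod by blast
  ultimately have "\<exists>a\<in>fiber x H. \<exists>b\<in>fiber y H. {a,b} \<in> edges (dprod G H) - S"
    by blast
  moreover have "fiber x H \<in> (\<lambda>x. fiber x H) ` verts G" "fiber y H \<in> (\<lambda>x. fiber x H) ` verts G"
    using assms(2,3) by simp_all
  ultimately show ?thesis
    using assms(4) unfolding edges_fiber_graph by blast
qed

(* A disconnected fiber graph yields a partition (X,Y) of V(G) all of whose crossing
   edges lie in S: take X to be the vertices whose fibers are reachable from a fixed fiber. *)
lemma disconnected_fiber_graph_cut:
  assumes "graph H" "\<not> connected (fiber_graph G H S)"
  obtains X Y where "X \<noteq> {}" "Y \<noteq> {}" "X \<union> Y = verts G" "X \<inter> Y = {}"
    and "fiber_cut G H X Y \<subseteq> S"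
proof -
  define R where "R = {(F1, F2). {F1, F2} \<in> edges (fiber_graph G H S)}"
  obtain F1 F2 where F: "F1 \<in> verts (fiber_graph G H S)" "F2 \<in> verts (fiber_graph G H S)"
    and unreach: "(F1, F2) \<notin> R\<^sup>*"
    using assms(2) unfolding connected_def R_def by blast
  obtain x0 y0 where x0: "x0 \<in> verts G" "F1 = fiber x0 H" and y0: "y0 \<in> verts G" "F2 = fiber y0 H"
    using F unfolding verts_fiber_graph by blast
  define X where "X = {x \<in> verts G. (F1, fiber x H) \<in> R\<^sup>*}"
  define Y where "Y = verts G - X"
  have closed: "y \<in> X"
    if "x \<in> X" "y \<in> verts G" "{x,y} \<in> edges G" "{u,v} \<in> edges H" "{(x,u),(y,v)} \<notin> S"
    for x y u v
  proof (cases "fiber x H = fiber y H")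
    case True
    then show ?thesis using that(1,2) unfolding X_def by simp
  next
    case False
    have "x \<in> verts G" using that(1) unfolding X_def by simp
    then have "(fiber x H, fiber y H) \<in> R"
      using fiber_graph_edgeI[OF assms(1) _ that(2) False that(3-5)] unfolding R_def by simp
    moreover have "(F1, fiber x H) \<in> R\<^sup>*" using that(1) unfolding X_def by simp
    ultimately show ?thesis using that(2) unfolding X_def by simp
  qed
  have "fiber_cut G H X Y \<subseteq> S"
  proof
    fix e assume "e \<in> fiber_cut G H X Y"
    then obtain x y u v where e: "e = {(x,u),(y,v)}" and xy: "x \<in> X" "y \<in> Y"
      and edges: "{x,y} \<in> edges G" "{u,v} \<in> edges H"
      unfolding fiber_cut_def by blast
    show "e \<in> S"
    proof (rule ccontr)
      assume "e \<notin> S"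
      then have "y \<in> X" using closed[OF xy(1) _ edges] xy(2) e unfolding Y_def by blast
      then show False using xy(2) unfolding Y_def by simp
    qed
  qed
  moreover have "x0 \<in> X" using x0 unfolding X_def by simp
  moreover have "y0 \<in> Y" using y0 unreach unfolding X_def Y_def by simp
  moreover have "X \<union> Y = verts G" "X \<inter> Y = {}" unfolding X_def Y_def by auto
  ultimately show ?thesis using that by blast
qed

theorem lemma1:
  fixes G :: "'a graph" and H :: "'b graph" and S :: "('a \<times> 'b) set set"
  assumes "graph G" and "graph H" and "card (verts G) \<ge> 2"
    and "S \<subseteq> edges (dprod G H)"
    and "\<not> connected (fiber_graph G H S)"
  shows "card S > 2 * edge_conn G * card (edges H)
      \<or> (card S = 2 * edge_conn G * card (edges H)
          \<and> (\<exists>S0. is_min_edge_cut G S0 \<and> S = induced_set S0 H))"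
proof -
  obtain X Y where XY: "X \<noteq> {}" "Y \<noteq> {}" "X \<union> Y = verts G" "X \<inter> Y = {}"
    and crossing_in_S: "fiber_cut G H X Y \<subseteq> S"
    using disconnected_fiber_graph_cut[OF assms(2,5)] .
  define C where "C = edges_between G X Y"
  have cut: "is_edge_cut G C" unfolding is_edge_cut_def C_def using XY by blast
  have induced_in_S: "induced_set C H \<subseteq> S"
    using crossing_in_S by (simp add: C_def induced_set_edges_between)
  have card_induced: "card (induced_set C H) = 2 * card C * card (edges H)"
    using card_fiber_cut[OF assms(2) XY(4)] by (simp add: C_def induced_set_edges_between)
  have finite_S: "finite S"
    using assms(4) graph_finite_edges[OF graph_dprod[OF assms(1,2)]] finite_subset by blast
  have conn_bound: "2 * edge_conn G * card (edges H) \<le> 2 * card C * card (edges H)"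
    using edge_conn_le[OF assms(1) cut] by simp
  have size_bound: "2 * card C * card (edges H) \<le> card S"
    using card_induced card_mono[OF finite_S induced_in_S] by simp
  consider "card S > 2 * edge_conn G * card (edges H)"
    | "card S = 2 * edge_conn G * card (edges H)" and "card S = 2 * card C * card (edges H)"
    using conn_bound size_bound by linarith
  then show ?thesis
  proof cases
    case 2
    then have S_eq: "S = induced_set C H"
      using card_induced card_subset_eq[OF finite_S induced_in_S] by simp
    show ?thesis
    proof (cases "edges H = {}")
      case True
      obtain S0 where "is_min_edge_cut G S0" using min_edge_cut_exists[OF assms(1) cut] .
      then show ?thesis using 2 S_eq True unfolding induced_set_def by auto
    next
      case False
      then have "card C = edge_conn G"
        using 2 graph_finite_edges[OF assms(2)] by simp
      then show ?thesis using 2 S_eq cut unfolding is_min_edge_cut_def by auto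
    qed
  qed simp
qed

end
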